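(* Let $n$ and $k$ be integers with $2 \leq k \leq n-2$, and let $M$ be the positroid on ground set $[n]$ of rank $k$ with Grassmann necklace $(I_1, I_2, \dots, I_n)$. Then $M$ is a sparse paving matroid if and only if for every $i \in [n]$, $I_i \neq C_{k,n}^{(i)}$ implies that $I_{i-1} = C_{k,n}^{(i-1)}$, $I_{i+1} = C_{k,n}^{(i+1)}$, and $I_i = (C_{k,n}^{(i)} \setminus \{i + k - 1\}) \cup \{i+k\}$ (all indices and elements computed modulo $n$ with representatives in $[n]$). Moreover, in this case, the set of circuit-hyperplanes of $M$ consists precisely of the sets $C_{k,n}^{(i)}$ for those $i\in[n]$ with $I_i \neq C_{k,n}^{(i)}$.
   Context: For $t\in[n]$, the order $<_t$ on $[n]$ is $t <_t t+1 <_t \cdots <_t n <_t 1 <_t \cdots <_t t-1$. For $k$-subsets $I=\{a_1<_t\cdots<_t a_k\}$ and $J=\{b_1<_t\cdots<_t b_k\}$ of $[n]$, write $I\leq_t J$ if $a_i\leq_t b_i$ for all $i$. A Grassmann necklace is a sequence $(I_1,\dots,I_n)$ of $k$-subsets of $[n]$ such that (indices modulo $n$) if $i\in I_i$ then $I_{i+1}=(I_i\setminus\{i\})\cup\{j\}$ for some $j\in[n]$, and if $i\notin I_i$ then $I_{i+1}=I_i$. The positroid with Grassmann necklace $(I_1,\dots,I_n)$ is the matroid on $[n]$ whose set of bases is $\bigcap_{t=1}^n\{J\in\binom{[n]}{k}: I_t\leq_t J\}$; equivalently, for a positroid $M$ of rank $k$, $I_t$ is the $\leq_t$-minimal basis of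 $M$. For $i\in[n]$, $C_{k,n}^{(i)}=\{i,i+1,\dots,i+k-1\}$ computed modulo $n$ with representatives in $[n]$ (the cyclic interval of size $k$ starting at $i$). A matroid of rank $k$ is paving if every circuit has cardinality at least $k$, and sparse paving if both it and its dual are paving. A circuit-hyperplane is a set that is both a circuit and a hyperplane. *)

theory Defs
  imports Main
begin

definition cyc :: "nat \<Rightarrow> int \<Rightarrow> nat" where
  "cyc n x = nat ((x - 1) mod int n + 1)"

definition cint :: "nat \<Rightarrow> nat \<Rightarrow> int \<Rightarrow> nat set" where
  "cint n k i = {cyc n (i + int j) | j. j < k}"

text \<open>Position of a in the order t <_t t+1 <_t ... <_t t-1 (0 for t itself).\<close>
definition tpos :: "nat \<Rightarrow> nat \<Rightarrow> nat \<Rightarrow> int" where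
  "tpos n t a = (int a - int t) mod int n"

definition tle :: "nat \<Rightarrow> nat \<Rightarrow> nat \<Rightarrow> nat \<Rightarrow> bool" where
  "tle n t a b \<longleftrightarrow> tpos n t a \<le> tpos n t b"

definition tlist :: "nat \<Rightarrow> nat \<Rightarrow> nat set \<Rightarrow> nat list" where
  "tlist n t I = sort_key (tpos n t) (sorted_list_of_set I)"

definition gale_le :: "nat \<Rightarrow> nat \<Rightarrow> nat set \<Rightarrow> nat set \<Rightarrow> bool" where
  "gale_le n t I J \<longleftrightarrow> card I = card J \<and>
     (\<forall>i < card I. tle n t (tlist n t I ! i) (tlist n t J ! i))"

definition grassmann_necklace :: "nat \<Rightarrow> nat \<Rightarrow> (nat \<Rightarrow> nat set) \<Rightarrow> bool" where
  "grassmann_necklace n k I \<longleftrightarrow>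
     (\<forall>i\<in>{1..n}. I i \<subseteq> {1..n} \<and> card (I i) = k) \<and>
     (\<forall>i\<in>{1..n}.
        (i \<in> I i \<longrightarrow> (\<exists>j\<in>{1..n}. I (cyc n (int i + 1)) = (I i - {i}) \<union> {j})) \<and>
        (i \<notin> I i \<longrightarrow> I (cyc n (int i + 1)) = I i))"

definition positroid_bases :: "nat \<Rightarrow> nat \<Rightarrow> (nat \<Rightarrow> nat set) \<Rightarrow> nat set set" where
  "positroid_bases n k I =
     {J. J \<subseteq> {1..n} \<and> card J = k \<and> (\<forall>t\<in>{1..n}. gale_le n t (I t) J)}"

definition indep :: "'a set set \<Rightarrow> 'a set \<Rightarrow> bool" where
  "indep \<B> X \<longleftrightarrow> (\<exists>B\<in>\<B>. X \<subseteq> B)"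

definition mrank :: "'a set set \<Rightarrow> 'a set \<Rightarrow> nat" where
  "mrank \<B> X = Max (card ` {Y. Y \<subseteq> X \<and> indep \<B> Y})"

definition circuit :: "'a set \<Rightarrow> 'a set set \<Rightarrow> 'a set \<Rightarrow> bool" where
  "circuit E \<B> C \<longleftrightarrow> C \<subseteq> E \<and> \<not> indep \<B> C \<and> (\<forall>x\<in>C. indep \<B> (C - {x}))"

definition flat :: "'a set \<Rightarrow> 'a set set \<Rightarrow> 'a set \<Rightarrow> bool" where
  "flat E \<B> F \<longleftrightarrow> F \<subseteq> E \<and> (\<forall>x\<in>E - F. mrank \<B> (insert x F) > mrank \<B> F)"

definition hyperplane :: "'a set \<Rightarrow> 'a set set \<Rightarrow> 'a set \<Rightarrow> bool" where
  "hyperplane E \<B> H \<longleftrightarrow> flat E \<B> H \<and> mrank \<B> H + 1 = mrank \<B> E"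

definition circuit_hyperplanes :: "'a set \<Rightarrow> 'a set set \<Rightarrow> 'a set set" where
  "circuit_hyperplanes E \<B> = {X. circuit E \<B> X \<and> hyperplane E \<B> X}"

definition paving :: "'a set \<Rightarrow> 'a set set \<Rightarrow> bool" where
  "paving E \<B> \<longleftrightarrow> (\<forall>C. circuit E \<B> C \<longrightarrow> card C \<ge> mrank \<B> E)"

definition dual_bases :: "'a set \<Rightarrow> 'a set set \<Rightarrow> 'a set set" where
  "dual_bases E \<B> = (\<lambda>B. E - B) ` \<B>"

definition sparse_paving :: "'a set \<Rightarrow> 'a set set \<Rightarrow> bool" where
  "sparse_paving E \<B> \<longleftrightarrow> paving E \<B> \<and> paving E (dual_bases E \<B>)"

end

theory Submission
  imports Defs
begin

text \<open>
  The Gale order \<open>\<le>\<^sub>t\<close> compares counting functions: \<open>I \<le>\<^sub>t J\<close> iff every initial segment of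
  \<open><\<^sub>t\<close> contains at least as many elements of \<open>I\<close> as of \<open>J\<close>. Hence the cyclic interval
  \<open>C\<^sub>t\<close> is the \<open>\<le>\<^sub>t\<close>-least \<open>k\<close>-set, no other \<open>k\<close>-set lies below it, and its shift
  \<open>D\<^sub>t = C\<^sub>t - {t + k - 1} \<union> {t + k}\<close> lies below every \<open>k\<close>-set except \<open>C\<^sub>t\<close>.

  So under the necklace condition the bases are all \<open>k\<close>-sets except the \<open>C\<^sub>i\<close> with
  \<open>I\<^sub>i \<noteq> C\<^sub>i\<close>. Their starting points are at cyclic distance at least 2, so any two of them
  share at most \<open>k - 2\<close> elements, and removing such a family from the uniform matroid leaves a
  sparse paving matroid whose circuit-hyperplanes are exactly the removed sets.

  Conversely, in a sparse paving matroid of rank \<open>k\<close> every \<open>(k - 1)\<close>-set is independent and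
  every \<open>(k + 1)\<close>-set contains a basis. Applied to the first \<open>k - 1\<close> and \<open>k + 1\<close> elements
  of \<open><\<^sub>i\<close> this squeezes \<open>I\<^sub>i\<close> between them, which forces \<open>I\<^sub>i = D\<^sub>i\<close> when
  \<open>I\<^sub>i \<noteq> C\<^sub>i\<close>. The new element \<open>i + k\<close> of \<open>D\<^sub>i\<close> survives into \<open>I\<^bsub>i+1\<^esub>\<close>, which
  prevents \<open>I\<^bsub>i+1\<^esub>\<close> from being a shifted interval, so \<open>I\<^bsub>i+1\<^esub> = C\<^bsub>i+1\<^esub>\<close>; the
  same argument at \<open>i - 1\<close> gives \<open>I\<^bsub>i-1\<^esub> = C\<^bsub>i-1\<^esub>\<close>.
\<close>

section \<open>Cyclic orders on \<open>[n]\<close>\<close>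

text \<open>The base point \<open>t\<close> is an arbitrary integer, so that shifted
  base points such as \<open>i + 1\<close> need no reduction modulo \<open>n\<close>.\<close>

definition cyc_pos :: "nat \<Rightarrow> int \<Rightarrow> nat \<Rightarrow> int" where
  "cyc_pos n t x = (int x - t) mod int n"

definition cyc_seg :: "nat \<Rightarrow> int \<Rightarrow> int \<Rightarrow> nat set" where
  "cyc_seg n t v = {x \<in> {1..n}. cyc_pos n t x < v}"

lemma tpos_eq_cyc_pos: "tpos n t x = cyc_pos n (int t) x"
  unfolding tpos_def cyc_pos_def by simp

lemma cyc_cong:
  assumes "a mod int n = b mod int n"
  shows "cyc n a = cyc n b"
proof -
  have "(a - 1) mod int n = (b - 1) mod int n"
    using assms by (metis mod_diff_left_eq)
  then show ?thesis
    unfolding cyc_def by simp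
qed

lemma cyc_int: "x \<in> {1..n} \<Longrightarrow> cyc n (int x) = x"
  unfolding cyc_def by (simp add: mod_pos_pos_trivial)

lemma cyc_pos_inj:
  assumes "x \<in> {1..n}" and "y \<in> {1..n}" and "cyc_pos n t x = cyc_pos n t y"
  shows "x = y"
proof -
  have "(int x - t + t) mod int n = (int y - t + t) mod int n"
    using assms(3) unfolding cyc_pos_def by (metis mod_add_left_eq)
  then have "cyc n (int x) = cyc n (int y)"
    by (intro cyc_cong) simp
  then show ?thesis
    using cyc_int assms(1,2) by simp
qed

lemma card_le_of_subset_atLeastAtMost: "J \<subseteq> {1..n} \<Longrightarrow> card J \<le> n"
  using card_mono[of "{1..n}" J] by simp

lemma cyc_seg_subset: "cyc_seg n t v \<subseteq> {1..n}"
  unfolding cyc_seg_def by auto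

lemma finite_cyc_seg: "finite (cyc_seg n t v)"
  using cyc_seg_subset by (rule finite_subset) simp

lemma cyc_seg_mono: "v \<le> w \<Longrightarrow> cyc_seg n t v \<subseteq> cyc_seg n t w"
  unfolding cyc_seg_def by auto

locale cyclic =
  fixes n :: nat
  assumes n_pos: "0 < n"
begin

lemma int_cyc: "int (cyc n y) = (y - 1) mod int n + 1"
  unfolding cyc_def using n_pos by simp

lemma cyc_in_range: "cyc n y \<in> {1..n}"
  using int_cyc[of y] n_pos pos_mod_bound[of "int n" "y - 1"] pos_mod_sign[of "int n" "y - 1"]
  by (auto simp del: pos_mod_bound pos_mod_sign)

lemma cyc_pos_bounds: "0 \<le> cyc_pos n t x" "cyc_pos n t x < int n"
  unfolding cyc_pos_def using n_pos by auto

lemma cyc_pos_cyc: "cyc_pos n t (cyc n y) = (y - t) mod int n"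
proof -
  have "cyc_pos n t (cyc n y) = ((y - 1) mod int n + 1 - t) mod int n"
    unfolding cyc_pos_def int_cyc ..
  also have "\<dots> = (y - 1 + 1 - t) mod int n"
    by (metis mod_add_left_eq mod_diff_left_eq)
  finally show ?thesis by simp
qed

lemma cyc_cyc_pos:
  assumes "x \<in> {1..n}"
  shows "cyc n (t + cyc_pos n t x) = x"
proof (rule cyc_pos_inj[OF cyc_in_range assms])
  show "cyc_pos n t (cyc n (t + cyc_pos n t x)) = cyc_pos n t x"
    by (simp add: cyc_pos_cyc) (simp add: cyc_pos_def)
qed

lemma cyc_pos_cyc_base: "cyc_pos n (int (cyc n t)) x = cyc_pos n t x"
proof -
  have "cyc_pos n (int (cyc n t)) x = (int x - 1 - (t - 1) mod int n) mod int n"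
    unfolding cyc_pos_def int_cyc by (simp add: algebra_simps)
  also have "\<dots> = (int x - 1 - (t - 1)) mod int n"
    by (rule mod_diff_right_eq)
  finally show ?thesis
    unfolding cyc_pos_def by simp
qed

lemma cyc_seg_cyc_base: "cyc_seg n (int (cyc n t)) v = cyc_seg n t v"
  unfolding cyc_seg_def cyc_pos_cyc_base ..

lemma cyc_cyc_add: "cyc n (int (cyc n y) + a) = cyc n (y + a)"
proof (rule cyc_cong)
  have "int (cyc n y) mod int n = y mod int n"
    using cyc_pos_cyc[of 0 y] by (simp add: cyc_pos_def)
  then show "(int (cyc n y) + a) mod int n = (y + a) mod int n"
    by (metis mod_add_left_eq)
qed

lemma cyc_in_cyc_seg_iff: "cyc n (t + j) \<in> cyc_seg n t v \<longleftrightarrow> j mod int n < v"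
  unfolding cyc_seg_def using cyc_in_range by (simp add: cyc_pos_cyc)

lemma cyc_seg_eq_image:
  assumes "0 \<le> v" and "v \<le> int n"
  shows "cyc_seg n t v = (\<lambda>j. cyc n (t + int j)) ` {..<nat v}"
proof (intro set_eqI iffI)
  fix x assume "x \<in> cyc_seg n t v"
  then have x: "x \<in> {1..n}" "cyc_pos n t x < v"
    unfolding cyc_seg_def by auto
  then have "x = cyc n (t + int (nat (cyc_pos n t x)))"
    using cyc_cyc_pos cyc_pos_bounds(1) by simp
  moreover have "nat (cyc_pos n t x) < nat v"
    using x(2) cyc_pos_bounds(1)[of t x] by linarith
  ultimately show "x \<in> (\<lambda>j. cyc n (t + int j)) ` {..<nat v}"
    by blast
next
  fix x assume "x \<in> (\<lambda>j. cyc n (t + int j)) ` {..<nat v}"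
  then obtain j where "j < nat v" and "x = cyc n (t + int j)"
    by auto
  then show "x \<in> cyc_seg n t v"
    using assms by (simp add: cyc_in_cyc_seg_iff)
qed

lemma card_cyc_seg:
  assumes "0 \<le> v" and "v \<le> int n"
  shows "card (cyc_seg n t v) = nat v"
proof -
  have "inj_on (\<lambda>j. cyc n (t + int j)) {..<nat v}"
  proof (rule inj_on_inverseI)
    fix j assume "j \<in> {..<nat v}"
    then show "nat (cyc_pos n t (cyc n (t + int j))) = j"
      using assms by (simp add: cyc_pos_cyc)
  qed
  then show ?thesis
    using assms by (simp add: cyc_seg_eq_image card_image)
qed

lemma cyc_seg_add1:
  assumes "0 \<le> v" and "v < int n"
  shows "cyc_seg n t (v + 1) = insert (cyc n (t + v)) (cyc_seg n t v)"
proof (intro set_eqI iffI)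
  have last: "cyc_pos n t (cyc n (t + v)) = v"
    using assms by (simp add: cyc_pos_cyc)
  fix x
  show "x \<in> insert (cyc n (t + v)) (cyc_seg n t v)" if "x \<in> cyc_seg n t (v + 1)"
  proof -
    have x: "x \<in> {1..n}" "cyc_pos n t x < v \<or> cyc_pos n t x = v"
      using that unfolding cyc_seg_def by auto
    then have "cyc_pos n t x = v \<Longrightarrow> x = cyc n (t + v)"
      using cyc_cyc_pos[OF x(1), of t] by simp
    then show ?thesis
      using x unfolding cyc_seg_def by blast
  qed
  show "x \<in> cyc_seg n t (v + 1)" if "x \<in> insert (cyc n (t + v)) (cyc_seg n t v)"
    using that last cyc_in_range[of "t + v"] unfolding cyc_seg_def by auto
qed

lemma cyc_notin_cyc_seg: "0 \<le> v \<Longrightarrow> v < int n \<Longrightarrow> cyc n (t + v) \<notin> cyc_seg n t v"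
  by (simp add: cyc_in_cyc_seg_iff)

lemma cint_eq_cyc_seg: "k \<le> n \<Longrightarrow> cint n k t = cyc_seg n t (int k)"
  unfolding cint_def by (auto simp: cyc_seg_eq_image)

lemma cint_subset: "cint n k t \<subseteq> {1..n}"
  unfolding cint_def using cyc_in_range by auto

lemma card_cint: "k \<le> n \<Longrightarrow> card (cint n k t) = k"
  by (simp add: cint_eq_cyc_seg card_cyc_seg)

lemma cint_cyc_base: "k \<le> n \<Longrightarrow> cint n k (int (cyc n t)) = cint n k t"
  by (simp add: cint_eq_cyc_seg cyc_seg_cyc_base)

end

section \<open>The Gale order via counting functions\<close>

lemma Suc_le_card_less_of_nth_less:
  assumes sorted: "sorted (map f L)" and "distinct L" and i: "i < length L"
    and less: "f (L ! i) < v"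
  shows "Suc i \<le> card {x \<in> set L. f x < v}"
proof -
  have "(\<lambda>j. L ! j) ` {0..i} \<subseteq> {x \<in> set L. f x < v}"
  proof
    fix x assume "x \<in> (\<lambda>j. L ! j) ` {0..i}"
    then obtain j where j: "j \<le> i" "x = L ! j"
      by auto
    have "f (L ! j) \<le> f (L ! i)"
      using sorted_nth_mono[OF sorted, of j i] j i by simp
    then show "x \<in> {x \<in> set L. f x < v}"
      using j i less by auto
  qed
  moreover have "inj_on (\<lambda>j. L ! j) {0..i}"
    using \<open>distinct L\<close> i by (auto simp: inj_on_def nth_eq_iff_index_eq)
  ultimately show ?thesis
    by (metis card_atLeastAtMost card_image card_mono diff_zero finite_filter finite_set set_filter)
qed

lemma card_less_le_of_nth_ge:
  assumes sorted: "sorted (map f L)" and i: "i < length L" and ge: "v \<le> f (L ! i)"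
  shows "card {x \<in> set L. f x < v} \<le> i"
proof -
  have "{x \<in> set L. f x < v} \<subseteq> (\<lambda>j. L ! j) ` {0..<i}"
  proof
    fix x assume x: "x \<in> {x \<in> set L. f x < v}"
    then obtain j where j: "j < length L" "x = L ! j"
      by (auto simp: in_set_conv_nth)
    have "\<not> i \<le> j"
      using sorted_nth_mono[OF sorted, of i j] j x ge by auto
    then show "x \<in> (\<lambda>j. L ! j) ` {0..<i}"
      using j by auto
  qed
  then have "card {x \<in> set L. f x < v} \<le> card ((\<lambda>j. L ! j) ` {0..<i})"
    by (rule card_mono[rotated]) simp
  also have "\<dots> \<le> i"
    using card_image_le[of "{0..<i}" "\<lambda>j. L ! j"] by simp
  finally show ?thesis .
qed

lemma sorted_nth_less_iff_card:
  assumes "sorted (map f L)" and "distinct L" and "i < length L"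
  shows "f (L ! i) < v \<longleftrightarrow> i < card {x \<in> set L. f x < v}"
  using Suc_le_card_less_of_nth_less[OF assms] card_less_le_of_nth_ge[OF assms(1,3)]
  by (meson Suc_le_eq not_le)

lemma tlist_nth_less_iff_card:
  assumes "finite X" and "i < card X"
  shows "tpos n t (tlist n t X ! i) < v \<longleftrightarrow> i < card {x \<in> X. tpos n t x < v}"
  using sorted_nth_less_iff_card[of "tpos n t" "tlist n t X" i v] assms
  unfolding tlist_def by (simp add: sorted_sort_key)

lemma gale_le_iff_card_less:
  assumes "finite X" and "finite Y"
  shows "gale_le n t X Y \<longleftrightarrow> card X = card Y \<and>
     (\<forall>v. card {y \<in> Y. tpos n t y < v} \<le> card {x \<in> X. tpos n t x < v})"
    (is "_ \<longleftrightarrow> _ \<and> (\<forall>v. ?cY v \<le> ?cX v)")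
proof -
  let ?f = "tpos n t" and ?X = "tlist n t X" and ?Y = "tlist n t Y"
  note X_less = tlist_nth_less_iff_card[OF assms(1), where n = n and t = t]
    and Y_less = tlist_nth_less_iff_card[OF assms(2), where n = n and t = t]
  show ?thesis
  proof
    assume gale: "gale_le n t X Y"
    then have card_eq: "card X = card Y"
      and le: "\<And>i. i < card X \<Longrightarrow> ?f (?X ! i) \<le> ?f (?Y ! i)"
      unfolding gale_le_def tle_def by auto
    have "?cY v \<le> ?cX v" for v
    proof (cases "?cY v = 0")
      case False
      define i where "i = ?cY v - 1"
      have "?cY v \<le> card Y"
        using assms by (intro card_mono) auto
      then have i: "i < card Y" "i < ?cY v"
        using False i_def by auto
      then have "?f (?Y ! i) < v"
        using Y_less by blast
      then have "?f (?X ! i) < v"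
        using le[of i] i card_eq by simp
      then show ?thesis
        using X_less[of i v] i card_eq i_def False by simp
    qed simp
    with card_eq show "card X = card Y \<and> (\<forall>v. ?cY v \<le> ?cX v)"
      by blast
  next
    assume counts: "card X = card Y \<and> (\<forall>v. ?cY v \<le> ?cX v)"
    have "?f (?X ! i) \<le> ?f (?Y ! i)" if i: "i < card X" for i
    proof -
      let ?v = "?f (?Y ! i) + 1"
      have "i < ?cY ?v"
        using Y_less[of i ?v] i counts by simp
      also have "\<dots> \<le> ?cX ?v"
        using counts by blast
      finally show ?thesis
        using X_less[OF i, of ?v] by simp
    qed
    then show "gale_le n t X Y"
      using counts unfolding gale_le_def tle_def by auto
  qed
qed

lemma gale_le_iff_card_cyc_seg:
  assumes "X \<subseteq> {1..n}" and "Y \<subseteq> {1..n}"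
  shows "gale_le n t X Y \<longleftrightarrow> card X = card Y \<and>
     (\<forall>v. card (Y \<inter> cyc_seg n (int t) v) \<le> card (X \<inter> cyc_seg n (int t) v))"
proof -
  have "{x \<in> Z. tpos n t x < v} = Z \<inter> cyc_seg n (int t) v" if "Z \<subseteq> {1..n}" for Z v
    using that unfolding cyc_seg_def tpos_eq_cyc_pos by auto
  moreover have "finite X" "finite Y"
    using assms finite_subset by auto
  ultimately show ?thesis
    using assms by (simp add: gale_le_iff_card_less)
qed

section \<open>Cyclic intervals in the Gale order\<close>

definition cint_shift :: "nat \<Rightarrow> nat \<Rightarrow> int \<Rightarrow> nat set" where
  "cint_shift n k t = (cint n k t - {cyc n (t + int k - 1)}) \<union> {cyc n (t + int k)}"

context cyclic
begin

lemma gale_le_cint: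
  assumes J: "J \<subseteq> {1..n}" "card J = k"
  shows "gale_le n t (cint n k (int t)) J"
proof -
  let ?s = "cyc_seg n (int t)"
  have k: "k \<le> n"
    using card_le_of_subset_atLeastAtMost J by auto
  have C: "cint n k (int t) = ?s (int k)" "card (?s (int k)) = k"
    using k by (simp_all add: cint_eq_cyc_seg card_cyc_seg)
  have "card (J \<inter> ?s v) \<le> card (?s (int k) \<inter> ?s v)" for v
  proof (cases "v \<le> int k")
    case True
    then have "?s (int k) \<inter> ?s v = ?s v"
      using cyc_seg_mono by blast
    then show ?thesis
      by (simp add: card_mono finite_cyc_seg)
  next
    case False
    then have "?s (int k) \<inter> ?s v = ?s (int k)"
      using cyc_seg_mono[of "int k" v] by auto
    moreover have "card (J \<inter> ?s v) \<le> card J"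
      using J finite_subset by (intro card_mono) auto
    ultimately show ?thesis
      using C J by simp
  qed
  then show ?thesis
    using gale_le_iff_card_cyc_seg[OF cyc_seg_subset J(1)] C J by simp
qed

lemma eq_cint_of_gale_le:
  assumes X: "X \<subseteq> {1..n}" "card X = k" and gale: "gale_le n t X (cint n k (int t))"
  shows "X = cint n k (int t)"
proof -
  let ?C = "cint n k (int t)"
  have k: "k \<le> n"
    using card_le_of_subset_atLeastAtMost X by auto
  have C: "?C = cyc_seg n (int t) (int k)" "card ?C = k"
    using k by (simp_all add: cint_eq_cyc_seg card_cyc_seg)
  have "finite X"
    using X finite_subset by auto
  have "card (?C \<inter> ?C) \<le> card (X \<inter> ?C)"
    using gale gale_le_iff_card_cyc_seg[OF X(1) cyc_seg_subset] C(1) by metis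
  then have "card X \<le> card (X \<inter> ?C)"
    using C X by simp
  then have "X \<inter> ?C = X"
    using card_subset_eq[OF \<open>finite X\<close>, of "X \<inter> ?C"] card_mono[OF \<open>finite X\<close>, of "X \<inter> ?C"]
    by auto
  then have "X \<subseteq> ?C"
    by blast
  then show ?thesis
    using card_subset_eq[OF finite_cyc_seg] C X by metis
qed

lemma cint_eq_insert_last:
  assumes "1 \<le> k" and "k \<le> n"
  shows "cint n k t = insert (cyc n (t + int k - 1)) (cyc_seg n t (int k - 1))"
  using assms cyc_seg_add1[of "int k - 1" t] by (simp add: cint_eq_cyc_seg add_diff_eq)

lemma cyc_seg_Suc_eq_insert_cint:
  "k < n \<Longrightarrow> cyc_seg n t (int k + 1) = insert (cyc n (t + int k)) (cint n k t)"
  using cyc_seg_add1[of "int k" t] by (simp add: cint_eq_cyc_seg)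

lemma cyc_notin_cint: "k < n \<Longrightarrow> cyc n (t + int k) \<notin> cint n k t"
  using cyc_notin_cyc_seg[of "int k" t] by (simp add: cint_eq_cyc_seg)

lemma cint_shift_eq:
  assumes "1 \<le> k" and "k < n"
  shows "cint_shift n k t = insert (cyc n (t + int k)) (cyc_seg n t (int k - 1))"
proof -
  have "cyc n (t + (int k - 1)) \<notin> cyc_seg n t (int k - 1)"
    using assms by (intro cyc_notin_cyc_seg) auto
  then show ?thesis
    using assms cint_eq_insert_last[of k t] unfolding cint_shift_def by (auto simp: add_diff_eq)
qed

lemma cint_shift_subset: "1 \<le> k \<Longrightarrow> k < n \<Longrightarrow> cint_shift n k t \<subseteq> {1..n}"
  using cyc_seg_subset cyc_in_range by (simp add: cint_shift_eq)

lemma cint_shift_inter_cint: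
  assumes "1 \<le> k" and "k < n"
  shows "cint_shift n k t \<inter> cint n k t = cyc_seg n t (int k - 1)"
  using assms cyc_notin_cint[of k t] cint_eq_insert_last[of k t] by (auto simp: cint_shift_eq)

lemma cint_shift_subset_cyc_seg:
  assumes "1 \<le> k" and "k < n"
  shows "cint_shift n k t \<subseteq> cyc_seg n t (int k + 1)"
  using assms cint_eq_insert_last[of k t] by (auto simp: cint_shift_eq cyc_seg_Suc_eq_insert_cint)

lemma card_cint_shift:
  assumes "1 \<le> k" and "k < n"
  shows "card (cint_shift n k t) = k"
proof -
  have "cyc n (t + int k) \<notin> cyc_seg n t (int k - 1)"
    using assms cyc_notin_cint[of k t] cint_eq_insert_last[of k t] by auto
  then show ?thesis
    using assms by (simp add: cint_shift_eq finite_cyc_seg card_cyc_seg)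
qed

lemma card_bounds_of_ne_cint:
  assumes J: "J \<subseteq> {1..n}" "card J = k" and ne: "J \<noteq> cint n k t"
  shows "1 \<le> k" and "k < n"
proof -
  have "k \<le> n"
    using card_le_of_subset_atLeastAtMost J by auto
  moreover have "k \<noteq> 0"
    using J ne finite_subset[OF J(1)] by (auto simp: cint_def)
  moreover have "k \<noteq> n"
  proof
    assume "k = n"
    then have "J = {1..n}" "cint n k t = {1..n}"
      using J cint_subset card_cint[of k t] by (simp_all add: card_subset_eq)
    then show False
      using ne by simp
  qed
  ultimately show "1 \<le> k" "k < n"
    by auto
qed

lemma gale_le_cint_shift:
  assumes J: "J \<subseteq> {1..n}" "card J = k" and ne: "J \<noteq> cint n k (int t)"
  shows "gale_le n t (cint_shift n k (int t)) J"
proof -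
  let ?s = "cyc_seg n (int t)" and ?D = "cint_shift n k (int t)"
  have "finite J"
    using J finite_subset by auto
  note k = card_bounds_of_ne_cint[OF J ne]
  have "card (J \<inter> ?s v) \<le> card (?D \<inter> ?s v)" for v
  proof -
    consider "v \<le> int k - 1" | "v = int k" | "int k + 1 \<le> v"
      by linarith
    then show ?thesis
    proof cases
      case 1
      then have "?D \<inter> ?s v = ?s v"
        using cint_shift_eq[OF k] cyc_seg_mono[OF 1] by blast
      then show ?thesis
        by (simp add: card_mono finite_cyc_seg)
    next
      case 2
      have "\<not> J \<subseteq> cint n k (int t)"
      proof
        assume "J \<subseteq> cint n k (int t)"
        moreover have "finite (cint n k (int t))"
          using cint_subset by (rule finite_subset) simp
        ultimately have "J = cint n k (int t)"
          using card_subset_eq card_cint[of k "int t"] J(2) k by (metis less_imp_le)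
        then show False
          using ne by simp
      qed
      then have "card (J \<inter> cint n k (int t)) < k"
        using J \<open>finite J\<close> psubset_card_mono[of J "J \<inter> cint n k (int t)"] by blast
      moreover have "card (?D \<inter> cint n k (int t)) = k - 1"
        using k by (simp add: cint_shift_inter_cint card_cyc_seg)
      ultimately show ?thesis
        using 2 k by (simp add: cint_eq_cyc_seg)
    next
      case 3
      then have "?D \<inter> ?s v = ?D"
        using cint_shift_subset_cyc_seg[OF k] cyc_seg_mono[OF 3] by blast
      moreover have "card (J \<inter> ?s v) \<le> k"
        using J \<open>finite J\<close> card_mono[of J "J \<inter> ?s v"] by auto
      ultimately show ?thesis
        using card_cint_shift[OF k] by simp
    qed
  qed
  then show ?thesis
    using gale_le_iff_card_cyc_seg[OF cint_shift_subset[OF k] J(1)] card_cint_shift[OF k] J by simp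
qed

text \<open>With \<open>d\<close> the \<open><\<^sub>t\<close>-position of \<open>j\<close> and \<open>m = max 0 (k + d - n)\<close>, the elements at
  \<open><\<^sub>t\<close>-positions \<open>m\<close> and \<open>m + 1\<close> lie in \<open>C\<^sub>t\<close> but not in \<open>C\<^sub>j\<close>: they come before \<open>j\<close>,
  and seen from \<open>j\<close> they sit at positions \<open>\<ge> k\<close>.\<close>

lemma card_cint_inter_le:
  assumes k: "2 \<le> k" "k + 2 \<le> n"
    and d: "2 \<le> cyc_pos n t j" "cyc_pos n t j \<le> int n - 2"
  shows "card (cint n k t \<inter> cint n k (int j)) + 2 \<le> k"
proof -
  let ?C = "cyc_seg n t (int k)" and ?C' = "cyc_seg n (int j) (int k)"
  define d where "d = cyc_pos n t j"
  define m where "m = max 0 (int k + d - int n)"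
  let ?a = "cyc n (t + m)" and ?b = "cyc n (t + (m + 1))"
  have m: "0 \<le> m" "m + 1 < int k" "m + 1 < d" "int k + d - int n \<le> m"
    using d k unfolding m_def d_def by auto
  have pos_t: "cyc_pos n t (cyc n (t + l)) = l" if "0 \<le> l" "l < int n" for l
    using that by (simp add: cyc_pos_cyc)
  have pos_j: "cyc_pos n (int j) (cyc n (t + l)) = l - d + int n" if "0 \<le> l" "l < d" for l
  proof -
    have "cyc_pos n (int j) (cyc n (t + l)) = (l - (int j - t)) mod int n"
      by (simp add: cyc_pos_cyc algebra_simps)
    also have "\<dots> = (l - d) mod int n"
      unfolding d_def cyc_pos_def by (rule mod_diff_right_eq[symmetric])
    also have "\<dots> = (l - d + int n) mod int n"
      by simp
    also have "\<dots> = l - d + int n"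
      using that d(2) unfolding d_def by (intro mod_pos_pos_trivial) auto
    finally show ?thesis .
  qed
  have in_C: "?a \<in> ?C" "?b \<in> ?C"
    using pos_t[of m] pos_t[of "m + 1"] m k cyc_in_range unfolding cyc_seg_def by auto
  have notin_C': "?a \<notin> ?C'" "?b \<notin> ?C'"
    using pos_j[of m] pos_j[of "m + 1"] m unfolding cyc_seg_def by auto
  have "?a \<noteq> ?b"
    using pos_t[of m] pos_t[of "m + 1"] m k by auto
  have "card (?C \<inter> ?C') \<le> card (?C - {?a, ?b})"
    using notin_C' by (intro card_mono) (auto simp: finite_cyc_seg)
  also have "\<dots> = k - 2"
    using in_C \<open>?a \<noteq> ?b\<close> k by (simp add: card_Diff_subset finite_cyc_seg card_cyc_seg)
  finally show ?thesis
    using k by (simp add: cint_eq_cyc_seg)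
qed

lemma cint_shift_cyc_base:
  assumes "1 \<le> k" "k < n"
  shows "cint_shift n k (int (cyc n t)) = insert (cyc n (t + int k)) (cyc_seg n t (int k - 1))"
  using assms by (simp add: cint_shift_eq cyc_seg_cyc_base cyc_cyc_add)

end

section \<open>Grassmann necklaces\<close>

locale necklace = cyclic +
  fixes k :: nat and I :: "nat \<Rightarrow> nat set"
  assumes is_necklace: "grassmann_necklace n k I"
begin

lemma necklace_subset: "t \<in> {1..n} \<Longrightarrow> I t \<subseteq> {1..n}"
  using is_necklace unfolding grassmann_necklace_def by auto

lemma card_necklace: "t \<in> {1..n} \<Longrightarrow> card (I t) = k"
  using is_necklace unfolding grassmann_necklace_def by auto

lemma finite_necklace: "t \<in> {1..n} \<Longrightarrow> finite (I t)"
  using necklace_subset finite_subset by blast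

lemma k_le_n: "k \<le> n"
  using card_le_of_subset_atLeastAtMost[OF necklace_subset] card_necklace n_pos by force

lemma necklace_step_subset: "t \<in> {1..n} \<Longrightarrow> I t - {t} \<subseteq> I (cyc n (int t + 1))"
  using is_necklace unfolding grassmann_necklace_def by (cases "t \<in> I t") auto

lemma card_necklace_step_le:
  assumes t: "t \<in> {1..n}" and "t \<in> P"
  shows "card (I (cyc n (int t + 1)) \<inter> P) \<le> card (I t \<inter> P)"
proof (cases "t \<in> I t")
  case True
  then obtain j where j: "I (cyc n (int t + 1)) = (I t - {t}) \<union> {j}"
    using is_necklace t unfolding grassmann_necklace_def by blast
  have fin: "finite (I t \<inter> P)"
    using finite_necklace[OF t] by simp
  have "card (I (cyc n (int t + 1)) \<inter> P) \<le> card (insert j (I t \<inter> P - {t}))"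
    using j fin by (intro card_mono) auto
  also have "\<dots> \<le> Suc (card (I t \<inter> P - {t}))"
    by (simp add: card_insert_le_m1 fin)
  also have "\<dots> = card (I t \<inter> P)"
    using True \<open>t \<in> P\<close> fin card.remove[of "I t \<inter> P" t] by simp
  finally show ?thesis .
next
  case False
  then have "I (cyc n (int t + 1)) = I t"
    using is_necklace t unfolding grassmann_necklace_def by blast
  then show ?thesis by simp
qed

lemma cyc_add_Suc: "cyc n (int (cyc n (u + int m)) + 1) = cyc n (u + int (Suc m))"
  using cyc_cyc_add[of "u + int m" 1] by (simp add: ac_simps)

lemma card_necklace_walk_le:
  assumes "\<forall>l<m. cyc n (u + int l) \<in> P"
  shows "card (I (cyc n (u + int m)) \<inter> P) \<le> card (I (cyc n u) \<inter> P)"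
  using assms
proof (induction m)
  case (Suc m)
  then have "card (I (cyc n (u + int (Suc m))) \<inter> P) \<le> card (I (cyc n (u + int m)) \<inter> P)"
    using card_necklace_step_le[OF cyc_in_range] cyc_add_Suc by (metis lessI)
  then show ?case
    using Suc by simp
qed simp

lemma necklace_walk_subset:
  assumes "\<forall>l<m. cyc n (u + int l) \<notin> P"
  shows "I (cyc n u) \<inter> P \<subseteq> I (cyc n (u + int m)) \<inter> P"
  using assms
proof (induction m)
  case (Suc m)
  then have "I (cyc n (u + int m)) \<inter> P \<subseteq> I (cyc n (u + int (Suc m))) \<inter> P"
    using necklace_step_subset[OF cyc_in_range, of "u + int m"] unfolding cyc_add_Suc by blast
  then show ?case
    using Suc by auto
qed simp

text \<open>Walk from \<open>s\<close> to \<open>t\<close> along the necklace. If \<open>t\<close> lies in the segment, every step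
  starts inside it and so does not increase the count. Otherwise walk on from \<open>t\<close> back to
  \<open>s\<close>: all these steps start outside the segment, so no element of it is lost.\<close>

lemma card_necklace_inter_cyc_seg_le:
  assumes s: "s \<in> {1..n}" and t: "t \<in> {1..n}"
  shows "card (I t \<inter> cyc_seg n (int s) v) \<le> card (I s \<inter> cyc_seg n (int s) v)"
proof -
  let ?P = "cyc_seg n (int s) v"
  define d where "d = nat (cyc_pos n (int s) t)"
  have d: "d < n" "cyc n (int s + int d) = t"
    using cyc_pos_bounds[of "int s" t] cyc_cyc_pos[OF t, of "int s"] unfolding d_def by auto
  have in_P: "cyc n (int s + int l) \<in> ?P \<longleftrightarrow> int l < v" if "l < n" for l
    using that by (simp add: cyc_in_cyc_seg_iff)
  show ?thesis
  proof (cases "int d \<le> v")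
    case True
    then have "\<forall>l<d. cyc n (int s + int l) \<in> ?P"
      using in_P d(1) by simp
    then show ?thesis
      using card_necklace_walk_le[of d "int s"] d(2) cyc_int[OF s] by simp
  next
    case False
    have "\<forall>l<n - d. cyc n ((int s + int d) + int l) \<notin> ?P"
      using in_P[of "d + _"] False by (simp add: add.assoc)
    then have "I t \<inter> ?P \<subseteq> I (cyc n (int s + int d + int (n - d))) \<inter> ?P"
      using necklace_walk_subset[of "n - d" "int s + int d"] d(2) by simp
    also have "cyc n (int s + int d + int (n - d)) = s"
      using d(1) cyc_cong[of "int s + int n" n "int s"] cyc_int[OF s] by simp
    finally show ?thesis
      by (intro card_mono) (simp_all add: finite_necklace[OF s])
  qed
qed

lemma gale_le_necklace: "s \<in> {1..n} \<Longrightarrow> t \<in> {1..n} \<Longrightarrow> gale_le n s (I s) (I t)"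
  using gale_le_iff_card_cyc_seg[OF necklace_subset necklace_subset]
    card_necklace_inter_cyc_seg_le card_necklace by simp

lemma necklace_in_positroid_bases: "s \<in> {1..n} \<Longrightarrow> I s \<in> positroid_bases n k I"
  unfolding positroid_bases_def using necklace_subset card_necklace gale_le_necklace by blast

lemma positroid_basisD: "J \<in> positroid_bases n k I \<Longrightarrow> J \<subseteq> {1..n} \<and> card J = k"
  unfolding positroid_bases_def by blast

lemma gale_le_positroid_basis:
  "J \<in> positroid_bases n k I \<Longrightarrow> t \<in> {1..n} \<Longrightarrow> gale_le n t (I t) J"
  unfolding positroid_bases_def by blast

lemma cyc_seg_subset_necklace:
  assumes t: "t \<in> {1..n}" and J: "J \<in> positroid_bases n k I" "cyc_seg n (int t) v \<subseteq> J"
  shows "cyc_seg n (int t) v \<subseteq> I t"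
proof -
  let ?P = "cyc_seg n (int t) v"
  have "card ?P \<le> card (I t \<inter> ?P)"
    using gale_le_positroid_basis[OF J(1) t] J(2) positroid_basisD[OF J(1)]
      gale_le_iff_card_cyc_seg[OF necklace_subset[OF t]] by (metis inf.absorb_iff2)
  moreover have "card (I t \<inter> ?P) \<le> card ?P"
    by (rule card_mono[OF finite_cyc_seg]) blast
  ultimately have "I t \<inter> ?P = ?P"
    using card_subset_eq[OF finite_cyc_seg[of n "int t" v], of "I t \<inter> ?P"] by simp
  then show ?thesis
    by blast
qed

lemma necklace_subset_cyc_seg:
  assumes t: "t \<in> {1..n}" and J: "J \<in> positroid_bases n k I" "J \<subseteq> cyc_seg n (int t) v"
  shows "I t \<subseteq> cyc_seg n (int t) v"
proof -
  let ?P = "cyc_seg n (int t) v"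
  have "card (J \<inter> ?P) \<le> card (I t \<inter> ?P)"
    using gale_le_positroid_basis[OF J(1) t] positroid_basisD[OF J(1)]
      gale_le_iff_card_cyc_seg[OF necklace_subset[OF t]] by blast
  then have "card (I t) \<le> card (I t \<inter> ?P)"
    using J positroid_basisD[OF J(1)] card_necklace[OF t] by (simp add: inf.absorb1)
  moreover have "card (I t \<inter> ?P) \<le> card (I t)"
    by (rule card_mono[OF finite_necklace[OF t]]) blast
  ultimately have "I t \<inter> ?P = I t"
    using card_subset_eq[OF finite_necklace[OF t], of "I t \<inter> ?P"] by simp
  then show ?thesis
    by blast
qed

end

section \<open>Matroids given by their bases\<close>

locale basis_family =
  fixes E :: "'a set" and \<B> :: "'a set set" and r :: nat
  assumes finite_ground: "finite E"
    and basis_subset: "B \<in> \<B> \<Longrightarrow> B \<subseteq> E"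
    and card_basis: "B \<in> \<B> \<Longrightarrow> card B = r"
    and bases_nonempty: "\<B> \<noteq> {}"
begin

lemma card_indep_le: "indep \<B> X \<Longrightarrow> card X \<le> r"
  unfolding indep_def
  using basis_subset card_basis card_mono finite_ground finite_subset by metis

lemma indep_basis: "B \<in> \<B> \<Longrightarrow> indep \<B> B"
  unfolding indep_def by blast

lemma finite_card_indep_subsets: "X \<subseteq> E \<Longrightarrow> finite (card ` {Y. Y \<subseteq> X \<and> indep \<B> Y})"
  using finite_ground by (simp add: finite_subset)

lemma mrank_attained:
  assumes "X \<subseteq> E"
  shows "\<exists>Y\<subseteq>X. indep \<B> Y \<and> card Y = mrank \<B> X"
proof -
  have "{} \<in> {Y. Y \<subseteq> X \<and> indep \<B> Y}"
    using bases_nonempty unfolding indep_def by blast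
  then have "mrank \<B> X \<in> card ` {Y. Y \<subseteq> X \<and> indep \<B> Y}"
    unfolding mrank_def using finite_card_indep_subsets[OF assms] by (intro Max_in) auto
  then show ?thesis
    by auto
qed

lemma card_indep_le_mrank: "X \<subseteq> E \<Longrightarrow> Y \<subseteq> X \<Longrightarrow> indep \<B> Y \<Longrightarrow> card Y \<le> mrank \<B> X"
  unfolding mrank_def using finite_card_indep_subsets by (intro Max_ge) auto

lemma mrank_ground: "mrank \<B> E = r"
proof (rule antisym)
  obtain Y where "indep \<B> Y" "card Y = mrank \<B> E"
    using mrank_attained[of E] by blast
  then show "mrank \<B> E \<le> r"
    using card_indep_le by metis
  obtain B where "B \<in> \<B>"
    using bases_nonempty by blast
  then show "r \<le> mrank \<B> E"
    using card_indep_le_mrank[of E B] basis_subset card_basis indep_basis by fastforce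
qed

lemma paving_iff_indep_card_less:
  "paving E \<B> \<longleftrightarrow> (\<forall>X\<subseteq>E. card X < r \<longrightarrow> indep \<B> X)"
proof
  assume paving: "paving E \<B>"
  show "\<forall>X\<subseteq>E. card X < r \<longrightarrow> indep \<B> X"
  proof (intro allI impI)
    fix X assume "X \<subseteq> E" "card X < r"
    then show "indep \<B> X"
    proof (induction "card X" arbitrary: X rule: less_induct)
      case less
      have "finite X"
        using less.prems finite_ground finite_subset by blast
      have "indep \<B> (X - {x})" if "x \<in> X" for x
        using less card_Diff1_less[OF \<open>finite X\<close> that] by auto
      then have "\<not> indep \<B> X \<Longrightarrow> circuit E \<B> X"
        unfolding circuit_def using less.prems by blast
      then show "indep \<B> X"
        using paving less.prems mrank_ground unfolding paving_def by force
    qed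
  qed
next
  assume "\<forall>X\<subseteq>E. card X < r \<longrightarrow> indep \<B> X"
  then show "paving E \<B>"
    unfolding paving_def circuit_def mrank_ground by (meson not_le)
qed

lemma indep_dual_bases_iff:
  assumes "X \<subseteq> E"
  shows "indep (dual_bases E \<B>) X \<longleftrightarrow> (\<exists>B\<in>\<B>. B \<subseteq> E - X)"
proof -
  have "X \<subseteq> E - B \<longleftrightarrow> B \<subseteq> E - X" if "B \<in> \<B>" for B
    using assms basis_subset[OF that] by blast
  then show ?thesis
    unfolding indep_def dual_bases_def by auto
qed

lemma basis_family_dual: "basis_family E (dual_bases E \<B>) (card E - r)"
proof
  show "finite E"
    by (rule finite_ground)
  show "dual_bases E \<B> \<noteq> {}"
    using bases_nonempty unfolding dual_bases_def by blast
next
  fix B assume "B \<in> dual_bases E \<B>"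
  then show "B \<subseteq> E"
    unfolding dual_bases_def by blast
next
  fix B assume "B \<in> dual_bases E \<B>"
  then obtain C where C: "C \<in> \<B>" "B = E - C"
    unfolding dual_bases_def by blast
  then have "finite C"
    using basis_subset finite_ground finite_subset by blast
  then show "card B = card E - r"
    using C basis_subset card_basis by (simp add: card_Diff_subset)
qed

lemma dual_paving_iff_ex_basis_subset:
  "paving E (dual_bases E \<B>) \<longleftrightarrow> (\<forall>Z\<subseteq>E. r < card Z \<longrightarrow> (\<exists>B\<in>\<B>. B \<subseteq> Z))"
proof -
  have complement: "card (E - X) = card E - card X" if "X \<subseteq> E" for X
    using that finite_subset[OF that finite_ground] by (simp add: card_Diff_subset)
  have "paving E (dual_bases E \<B>) \<longleftrightarrow>
      (\<forall>X\<subseteq>E. card X < card E - r \<longrightarrow> (\<exists>B\<in>\<B>. B \<subseteq> E - X))"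
    using basis_family.paving_iff_indep_card_less[OF basis_family_dual] indep_dual_bases_iff
    by simp
  also have "\<dots> \<longleftrightarrow> (\<forall>Z\<subseteq>E. r < card Z \<longrightarrow> (\<exists>B\<in>\<B>. B \<subseteq> Z))"
  proof (intro iffI allI impI)
    fix Z assume small: "\<forall>X\<subseteq>E. card X < card E - r \<longrightarrow> (\<exists>B\<in>\<B>. B \<subseteq> E - X)"
      and Z: "Z \<subseteq> E" "r < card Z"
    have "card (E - Z) < card E - r"
      using complement[OF Z(1)] card_mono[OF finite_ground Z(1)] Z(2) by linarith
    then obtain B where "B \<in> \<B>" "B \<subseteq> E - (E - Z)"
      using small by blast
    then show "\<exists>B\<in>\<B>. B \<subseteq> Z"
      using Z(1) by (metis Diff_Diff_Int inf.absorb2)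
  next
    fix X assume "\<forall>Z\<subseteq>E. r < card Z \<longrightarrow> (\<exists>B\<in>\<B>. B \<subseteq> Z)" "X \<subseteq> E" "card X < card E - r"
    then show "\<exists>B\<in>\<B>. B \<subseteq> E - X"
      using complement[of X] by auto
  qed
  finally show ?thesis .
qed

end

section \<open>Sparse paving matroids from families of \<open>k\<close>-sets\<close>

definition bases_avoiding :: "'a set \<Rightarrow> nat \<Rightarrow> 'a set set \<Rightarrow> 'a set set" where
  "bases_avoiding E k F = {J. J \<subseteq> E \<and> card J = k \<and> J \<notin> F}"

locale sparse_family =
  fixes E :: "'a set" and k :: nat and F :: "'a set set"
  assumes finite_E: "finite E"
    and two_le_k: "2 \<le> k"
    and k_add_two_le: "k + 2 \<le> card E"
    and family_subset: "X \<in> F \<Longrightarrow> X \<subseteq> E"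
    and card_family: "X \<in> F \<Longrightarrow> card X = k"
    and card_inter_family: "X \<in> F \<Longrightarrow> Y \<in> F \<Longrightarrow> X \<noteq> Y \<Longrightarrow> card (X \<inter> Y) + 2 \<le> k"
begin

lemma not_both_in_family: "X \<noteq> Y \<Longrightarrow> k - 1 \<le> card (X \<inter> Y) \<Longrightarrow> X \<notin> F \<or> Y \<notin> F"
  using card_inter_family two_le_k by fastforce

lemma bases_avoidingI: "J \<subseteq> E \<Longrightarrow> card J = k \<Longrightarrow> J \<notin> F \<Longrightarrow> J \<in> bases_avoiding E k F"
  unfolding bases_avoiding_def by blast

lemma indep_of_card_pred:
  assumes Y: "Y \<subseteq> E" "card Y = k - 1"
  shows "indep (bases_avoiding E k F) Y"
proof -
  have "finite Y"
    using Y finite_E finite_subset by blast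
  have "2 \<le> card (E - Y)"
    using Y k_add_two_le card_Diff_subset[OF \<open>finite Y\<close> Y(1)] by simp
  then obtain T where T: "T \<subseteq> E - Y" "card T = 2"
    by (rule obtain_subset_with_card_n)
  then obtain z1 z2 where z: "T = {z1, z2}" "z1 \<noteq> z2"
    by (auto simp: card_2_iff)
  have X: "insert z Y \<subseteq> E" "card (insert z Y) = k" if "z \<in> T" for z
    using that T Y two_le_k \<open>finite Y\<close> by (auto simp: card_insert_if)
  have "card Y \<le> card (insert z1 Y \<inter> insert z2 Y)"
    using \<open>finite Y\<close> by (intro card_mono) auto
  then have "insert z1 Y \<notin> F \<or> insert z2 Y \<notin> F"
    using not_both_in_family[of "insert z1 Y" "insert z2 Y"] z T Y(2) by auto
  then obtain z where "z \<in> T" "insert z Y \<notin> F"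
    using z by blast
  then have "insert z Y \<in> bases_avoiding E k F"
    using X bases_avoidingI by blast
  then show ?thesis
    unfolding indep_def by blast
qed

lemma indep_of_card_less:
  assumes "X \<subseteq> E" "card X < k"
  shows "indep (bases_avoiding E k F) X"
proof -
  have "card X \<le> k - 1" "k - 1 \<le> card E"
    using assms(2) k_add_two_le by simp_all
  from exists_subset_between[OF this assms(1) finite_E]
  obtain Y where "X \<subseteq> Y" "Y \<subseteq> E" "card Y = k - 1"
    by blast
  then have "indep (bases_avoiding E k F) Y"
    by (intro indep_of_card_pred)
  then show ?thesis
    using \<open>X \<subseteq> Y\<close> unfolding indep_def by blast
qed

lemma ex_basis_subset_of_card_Suc:
  assumes Z: "Z \<subseteq> E" "card Z = k + 1"
  shows "\<exists>B\<in>bases_avoiding E k F. B \<subseteq> Z"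
proof -
  have "finite Z"
    using Z finite_E finite_subset by blast
  have "2 \<le> card Z"
    using Z two_le_k by simp
  then obtain T where T: "T \<subseteq> Z" "card T = 2"
    by (rule obtain_subset_with_card_n)
  then obtain z1 z2 where "T = {z1, z2}" "z1 \<noteq> z2"
    by (auto simp: card_2_iff)
  then have z: "z1 \<in> Z" "z2 \<in> Z" "z1 \<noteq> z2"
    using T by auto
  have X: "Z - {z} \<subseteq> E" "card (Z - {z}) = k" if "z \<in> Z" for z
    using that Z by auto
  have "card (Z - {z1, z2}) = k - 1"
    using z Z card_Diff_subset[of "{z1, z2}" Z] by simp
  moreover have "(Z - {z1}) \<inter> (Z - {z2}) = Z - {z1, z2}"
    by blast
  moreover have "Z - {z1} \<noteq> Z - {z2}"
    using z by blast
  ultimately have "Z - {z1} \<notin> F \<or> Z - {z2} \<notin> F"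
    using not_both_in_family by (metis order_refl)
  then obtain z where "z \<in> Z" "Z - {z} \<notin> F"
    using z by blast
  then have "Z - {z} \<in> bases_avoiding E k F"
    using X bases_avoidingI by blast
  then show ?thesis
    by blast
qed

lemma ex_basis_subset_of_card_gt:
  assumes "Z \<subseteq> E" "k < card Z"
  shows "\<exists>B\<in>bases_avoiding E k F. B \<subseteq> Z"
proof -
  have "k + 1 \<le> card Z"
    using assms(2) by simp
  then obtain T where T: "T \<subseteq> Z" "card T = k + 1"
    by (rule obtain_subset_with_card_n)
  then have "T \<subseteq> E"
    using assms(1) by blast
  then obtain B where "B \<in> bases_avoiding E k F" "B \<subseteq> T"
    using ex_basis_subset_of_card_Suc T(2) by blast
  then show ?thesis
    using T(1) by blast
qed

sublocale basis_family E "bases_avoiding E k F" k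
proof
  show "bases_avoiding E k F \<noteq> {}"
    using ex_basis_subset_of_card_gt[of E] k_add_two_le by auto
qed (use finite_E in \<open>auto simp: bases_avoiding_def\<close>)

lemma sparse_paving_bases_avoiding: "sparse_paving E (bases_avoiding E k F)"
  unfolding sparse_paving_def paving_iff_indep_card_less dual_paving_iff_ex_basis_subset
  using indep_of_card_less ex_basis_subset_of_card_gt by blast

lemma not_indep_family:
  assumes "X \<in> F"
  shows "\<not> indep (bases_avoiding E k F) X"
proof
  assume "indep (bases_avoiding E k F) X"
  then obtain B where B: "B \<in> bases_avoiding E k F" "X \<subseteq> B"
    unfolding indep_def by blast
  then have "X = B"
    using card_subset_eq card_basis card_family[OF assms] basis_subset finite_E finite_subset
    by metis
  then show False
    using B assms unfolding bases_avoiding_def by blast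
qed

lemma indep_family_Diff:
  assumes "X \<in> F" "x \<in> X"
  shows "indep (bases_avoiding E k F) (X - {x})"
  using assms family_subset card_family finite_E finite_subset
  by (intro indep_of_card_pred) (auto simp: card_Diff_singleton)

lemma circuit_family: "X \<in> F \<Longrightarrow> circuit E (bases_avoiding E k F) X"
  unfolding circuit_def using family_subset not_indep_family indep_family_Diff by blast

lemma mrank_family:
  assumes X: "X \<in> F"
  shows "mrank (bases_avoiding E k F) X = k - 1"
proof (rule antisym)
  have "X \<subseteq> E" "card X = k"
    using family_subset[OF X] card_family[OF X] by simp_all
  have "finite X"
    using \<open>X \<subseteq> E\<close> finite_E finite_subset by blast
  obtain Y where Y: "Y \<subseteq> X" "indep (bases_avoiding E k F) Y"
    "card Y = mrank (bases_avoiding E k F) X"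
    using mrank_attained[OF \<open>X \<subseteq> E\<close>] by blast
  have "Y \<noteq> X"
    using Y(2) not_indep_family[OF X] by blast
  then have "card Y < card X"
    using Y(1) \<open>finite X\<close> by (meson psubsetI psubset_card_mono)
  then show "mrank (bases_avoiding E k F) X \<le> k - 1"
    using Y(3) \<open>card X = k\<close> by simp
  have "X \<noteq> {}"
    using \<open>card X = k\<close> two_le_k by auto
  then obtain x where "x \<in> X"
    by blast
  have "card (X - {x}) = k - 1"
    using \<open>x \<in> X\<close> \<open>card X = k\<close> by simp
  moreover have "card (X - {x}) \<le> mrank (bases_avoiding E k F) X"
    using card_indep_le_mrank[OF \<open>X \<subseteq> E\<close> _ indep_family_Diff[OF X \<open>x \<in> X\<close>]] by blast
  ultimately show "k - 1 \<le> mrank (bases_avoiding E k F) X"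
    by simp
qed

lemma hyperplane_family:
  assumes X: "X \<in> F"
  shows "hyperplane E (bases_avoiding E k F) X"
  unfolding hyperplane_def flat_def
proof (intro conjI ballI)
  show "X \<subseteq> E"
    by (rule family_subset[OF X])
  show "mrank (bases_avoiding E k F) X + 1 = mrank (bases_avoiding E k F) E"
    using mrank_family[OF X] mrank_ground two_le_k by simp
  fix x assume x: "x \<in> E - X"
  then have "insert x X \<subseteq> E"
    using family_subset[OF X] by blast
  moreover have "finite X"
    using family_subset[OF X] finite_E finite_subset by blast
  then have "k < card (insert x X)"
    using x card_family[OF X] by simp
  ultimately obtain B where B: "B \<in> bases_avoiding E k F" "B \<subseteq> insert x X"
    using ex_basis_subset_of_card_gt by blast
  have "card B \<le> mrank (bases_avoiding E k F) (insert x X)"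
    using card_indep_le_mrank[OF \<open>insert x X \<subseteq> E\<close> B(2) indep_basis[OF B(1)]] .
  then show "mrank (bases_avoiding E k F) X < mrank (bases_avoiding E k F) (insert x X)"
    using card_basis[OF B(1)] mrank_family[OF X] two_le_k by simp
qed

lemma family_of_circuit_hyperplane:
  assumes "X \<in> circuit_hyperplanes E (bases_avoiding E k F)"
  shows "X \<in> F"
proof (rule ccontr)
  assume "X \<notin> F"
  have "circuit E (bases_avoiding E k F) X" "hyperplane E (bases_avoiding E k F) X"
    using assms unfolding circuit_hyperplanes_def by simp_all
  then have X: "X \<subseteq> E" "\<not> indep (bases_avoiding E k F) X"
    and rank: "mrank (bases_avoiding E k F) X + 1 = k"
    using mrank_ground unfolding circuit_def hyperplane_def by simp_all
  have "\<not> k < card X"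
  proof
    assume "k < card X"
    then obtain B where B: "B \<in> bases_avoiding E k F" "B \<subseteq> X"
      using ex_basis_subset_of_card_gt X(1) by blast
    have "card B \<le> mrank (bases_avoiding E k F) X"
      using card_indep_le_mrank[OF X(1) B(2) indep_basis[OF B(1)]] .
    then show False
      using card_basis[OF B(1)] rank by simp
  qed
  moreover have "\<not> card X < k"
    using indep_of_card_less X by blast
  ultimately have "X \<in> bases_avoiding E k F"
    using bases_avoidingI X(1) \<open>X \<notin> F\<close> by simp
  then show False
    using indep_basis X(2) by blast
qed

lemma circuit_hyperplanes_bases_avoiding: "circuit_hyperplanes E (bases_avoiding E k F) = F"
  unfolding circuit_hyperplanes_def
  using family_of_circuit_hyperplane circuit_family hyperplane_family circuit_hyperplanes_def
  by blast

end

section \<open>Sparse paving positroids\<close>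

definition nonbasic_cints :: "nat \<Rightarrow> nat \<Rightarrow> (nat \<Rightarrow> nat set) \<Rightarrow> nat set set" where
  "nonbasic_cints n k I = {cint n k (int i) | i. i \<in> {1..n} \<and> I i \<noteq> cint n k (int i)}"

definition sparse_necklace :: "nat \<Rightarrow> nat \<Rightarrow> (nat \<Rightarrow> nat set) \<Rightarrow> bool" where
  "sparse_necklace n k I \<longleftrightarrow> (\<forall>i\<in>{1..n}. I i \<noteq> cint n k (int i) \<longrightarrow>
     I (cyc n (int i - 1)) = cint n k (int i - 1) \<and>
     I (cyc n (int i + 1)) = cint n k (int i + 1) \<and>
     I i = cint_shift n k (int i))"

locale positroid_necklace = necklace +
  assumes two_le_k: "2 \<le> k" and k_add_two_le_n: "k + 2 \<le> n"
begin

lemma basis_family_positroid: "basis_family {1..n} (positroid_bases n k I) k"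
proof
  show "positroid_bases n k I \<noteq> {}"
    using necklace_in_positroid_bases[of 1] n_pos by auto
qed (auto simp: positroid_bases_def)

interpretation positroid: basis_family "{1..n}" "positroid_bases n k I" k
  by (rule basis_family_positroid)

lemma sparse_paving_necklace_between:
  assumes sparse: "sparse_paving {1..n} (positroid_bases n k I)" and i: "i \<in> {1..n}"
  shows "cyc_seg n (int i) (int k - 1) \<subseteq> I i" and "I i \<subseteq> cyc_seg n (int i) (int k + 1)"
proof -
  let ?s = "cyc_seg n (int i)"
  have paving: "\<forall>X\<subseteq>{1..n}. card X < k \<longrightarrow> indep (positroid_bases n k I) X"
    and dual_paving: "\<forall>Z\<subseteq>{1..n}. k < card Z \<longrightarrow> (\<exists>B\<in>positroid_bases n k I. B \<subseteq> Z)"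
    using sparse positroid.paving_iff_indep_card_less positroid.dual_paving_iff_ex_basis_subset
    unfolding sparse_paving_def by simp_all
  have "card (?s (int k - 1)) < k"
    using two_le_k k_add_two_le_n by (simp add: card_cyc_seg)
  then have "indep (positroid_bases n k I) (?s (int k - 1))"
    using paving[rule_format, OF cyc_seg_subset] by blast
  then obtain J where "J \<in> positroid_bases n k I" "?s (int k - 1) \<subseteq> J"
    unfolding indep_def by blast
  then show "?s (int k - 1) \<subseteq> I i"
    by (rule cyc_seg_subset_necklace[OF i])
  have "k < card (?s (int k + 1))"
    using k_add_two_le_n by (simp add: card_cyc_seg)
  then obtain J where "J \<in> positroid_bases n k I" "J \<subseteq> ?s (int k + 1)"
    using dual_paving[rule_format, OF cyc_seg_subset] by blast
  then show "I i \<subseteq> ?s (int k + 1)"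
    by (rule necklace_subset_cyc_seg[OF i])
qed

lemma necklace_eq_cint_shift:
  assumes sparse: "sparse_paving {1..n} (positroid_bases n k I)"
    and i: "i \<in> {1..n}" and ne: "I i \<noteq> cint n k (int i)"
  shows "I i = cint_shift n k (int i)"
proof -
  let ?s = "cyc_seg n (int i)"
  let ?a = "cyc n (int i + int k - 1)" and ?b = "cyc n (int i + int k)"
  have k: "1 \<le> k" "k < n"
    using two_le_k k_add_two_le_n by auto
  note C = cint_eq_insert_last[OF k(1) less_imp_le[OF k(2)], of "int i"]
  note lower = sparse_paving_necklace_between(1)[OF sparse i]
  have upper: "I i \<subseteq> insert ?b (insert ?a (?s (int k - 1)))"
    using sparse_paving_necklace_between(2)[OF sparse i]
    unfolding cyc_seg_Suc_eq_insert_cint[OF k(2)] C .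
  have "?a \<notin> I i"
  proof
    assume "?a \<in> I i"
    then have "cint n k (int i) \<subseteq> I i"
      unfolding C using lower by blast
    then have "cint n k (int i) = I i"
      using card_subset_eq[OF finite_necklace[OF i]] card_necklace[OF i] card_cint[OF k_le_n]
      by simp
    then show False
      using ne by simp
  qed
  then have "I i \<subseteq> insert ?b (?s (int k - 1))"
    using upper by blast
  moreover have "card (insert ?b (?s (int k - 1))) \<le> card (I i)"
    using card_necklace[OF i] card_insert_le_m1[of k "?s (int k - 1)" ?b] k
    by (simp add: card_cyc_seg)
  ultimately have "I i = insert ?b (?s (int k - 1))"
    by (intro card_seteq) (simp_all add: finite_cyc_seg)
  then show ?thesis
    using cint_shift_eq[OF k] by simp
qed

text \<open>The element \<open>i + k\<close> of the shifted interval \<open>I\<^sub>i\<close> survives into \<open>I\<^bsub>i+1\<^esub>\<close>,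
  where it sits at position \<open>k - 1\<close> of \<open><\<^bsub>i+1\<^esub>\<close>; a shifted interval has no element there.\<close>

lemma necklace_succ_eq_cint:
  assumes sparse: "sparse_paving {1..n} (positroid_bases n k I)"
    and i: "i \<in> {1..n}" and ne: "I i \<noteq> cint n k (int i)"
  shows "I (cyc n (int i + 1)) = cint n k (int i + 1)"
proof (rule ccontr)
  let ?i' = "cyc n (int i + 1)" and ?b = "cyc n (int i + int k)"
  have k: "1 \<le> k" "k < n"
    using two_le_k k_add_two_le_n by auto
  assume "I ?i' \<noteq> cint n k (int i + 1)"
  then have "I ?i' = cint_shift n k (int ?i')"
    using necklace_eq_cint_shift[OF sparse cyc_in_range] cint_cyc_base[OF k_le_n] by simp
  then have I': "I ?i' = insert (cyc n (int i + 1 + int k)) (cyc_seg n (int i + 1) (int k - 1))"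
    using cint_shift_cyc_base[OF k] by simp
  have "?b \<in> I i"
    using necklace_eq_cint_shift[OF sparse i ne] cint_shift_def by simp
  moreover have "?b \<noteq> i"
    using cyc_pos_cyc[of "int i" "int i + int k"] k by (auto simp: cyc_pos_def)
  ultimately have "?b \<in> I ?i'"
    using necklace_step_subset[OF i] by blast
  have pos_b: "cyc_pos n (int i + 1) ?b = int k - 1"
    using k by (simp add: cyc_pos_cyc)
  moreover have "cyc_pos n (int i + 1) (cyc n (int i + 1 + int k)) = int k"
    using k by (simp add: cyc_pos_cyc)
  ultimately have "?b \<notin> insert (cyc n (int i + 1 + int k)) (cyc_seg n (int i + 1) (int k - 1))"
    unfolding cyc_seg_def by auto
  then show False
    using \<open>?b \<in> I ?i'\<close> I' by simp
qed

lemma necklace_pred_eq_cint: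
  assumes sparse: "sparse_paving {1..n} (positroid_bases n k I)"
    and i: "i \<in> {1..n}" and ne: "I i \<noteq> cint n k (int i)"
  shows "I (cyc n (int i - 1)) = cint n k (int i - 1)"
proof (rule ccontr)
  let ?h = "cyc n (int i - 1)"
  assume "I ?h \<noteq> cint n k (int i - 1)"
  then have "I (cyc n (int ?h + 1)) = cint n k (int ?h + 1)"
    using necklace_succ_eq_cint[OF sparse cyc_in_range] cint_cyc_base[OF k_le_n] by simp
  moreover have "cyc n (int ?h + 1) = i"
    using cyc_cyc_add[of "int i - 1" 1] cyc_int[OF i] by simp
  ultimately show False
    using ne cint_cyc_base[OF k_le_n, of "int ?h + 1"] by simp
qed

lemma sparse_necklace_of_sparse_paving:
  "sparse_paving {1..n} (positroid_bases n k I) \<Longrightarrow> sparse_necklace n k I"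
  unfolding sparse_necklace_def
  using necklace_pred_eq_cint necklace_succ_eq_cint necklace_eq_cint_shift by blast

lemma nonbasic_cyc_pos_bounds:
  assumes sparse: "sparse_necklace n k I"
    and i: "i \<in> {1..n}" "I i \<noteq> cint n k (int i)"
    and j: "j \<in> {1..n}" "I j \<noteq> cint n k (int j)" and "j \<noteq> i"
  shows "2 \<le> cyc_pos n (int i) j" and "cyc_pos n (int i) j \<le> int n - 2"
proof -
  have neighbours: "I (cyc n (int i - 1)) = cint n k (int i - 1)"
    "I (cyc n (int i + 1)) = cint n k (int i + 1)"
    using sparse i unfolding sparse_necklace_def by blast+
  define d where "d = cyc_pos n (int i) j"
  have j_eq: "j = cyc n (int i + d)"
    using cyc_cyc_pos[OF j(1)] unfolding d_def by simp
  have not_basic: "I (cyc n (int i + c)) \<noteq> cint n k (int i + c)" if "d = c" for c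
    using j(2) j_eq that cint_cyc_base[OF k_le_n, of "int i + c"] by simp
  have "d \<noteq> 0"
    using j_eq cyc_int[OF i(1)] \<open>j \<noteq> i\<close> by auto
  moreover have "d \<noteq> 1"
    using not_basic neighbours(2) by auto
  moreover have "d \<noteq> int n - 1"
  proof
    assume "d = int n - 1"
    have "int i + (int n - 1) = (int i - 1) + int n"
      by simp
    then have wrap: "cyc n (int i + (int n - 1)) = cyc n (int i - 1)"
      by (intro cyc_cong) (simp only: mod_add_self2)
    have "I (cyc n (int i + (int n - 1))) = cint n k (int i + (int n - 1))"
      using neighbours(1) wrap cint_cyc_base[OF k_le_n, of "int i + (int n - 1)"]
        cint_cyc_base[OF k_le_n, of "int i - 1"] by simp
    then show False
      using not_basic \<open>d = int n - 1\<close> by blast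
  qed
  ultimately show "2 \<le> cyc_pos n (int i) j" "cyc_pos n (int i) j \<le> int n - 2"
    using cyc_pos_bounds[of "int i" j] unfolding d_def by auto
qed

lemma card_inter_nonbasic_cints:
  assumes sparse: "sparse_necklace n k I"
    and X: "X \<in> nonbasic_cints n k I" and Y: "Y \<in> nonbasic_cints n k I" and "X \<noteq> Y"
  shows "card (X \<inter> Y) + 2 \<le> k"
proof -
  obtain i where i: "i \<in> {1..n}" "I i \<noteq> cint n k (int i)" "X = cint n k (int i)"
    using X unfolding nonbasic_cints_def by blast
  obtain j where j: "j \<in> {1..n}" "I j \<noteq> cint n k (int j)" "Y = cint n k (int j)"
    using Y unfolding nonbasic_cints_def by blast
  have "j \<noteq> i"
    using i(3) j(3) \<open>X \<noteq> Y\<close> by blast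
  then show ?thesis
    using card_cint_inter_le[OF two_le_k k_add_two_le_n]
      nonbasic_cyc_pos_bounds[OF sparse i(1,2) j(1,2)] i(3) j(3) by simp
qed

lemma sparse_family_nonbasic_cints:
  assumes "sparse_necklace n k I"
  shows "sparse_family {1..n} k (nonbasic_cints n k I)"
proof
  show "finite {1..n}" "2 \<le> k" "k + 2 \<le> card {1..n}"
    using two_le_k k_add_two_le_n by simp_all
next
  fix X assume "X \<in> nonbasic_cints n k I"
  then obtain i where "X = cint n k (int i)"
    unfolding nonbasic_cints_def by blast
  then show "X \<subseteq> {1..n}" "card X = k"
    using cint_subset card_cint[OF k_le_n] by simp_all
next
  fix X Y
  assume "X \<in> nonbasic_cints n k I" "Y \<in> nonbasic_cints n k I" "X \<noteq> Y"
  then show "card (X \<inter> Y) + 2 \<le> k"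
    by (rule card_inter_nonbasic_cints[OF assms])
qed

lemma positroid_bases_eq_bases_avoiding:
  assumes sparse: "sparse_necklace n k I"
  shows "positroid_bases n k I = bases_avoiding {1..n} k (nonbasic_cints n k I)"
proof (intro set_eqI iffI)
  fix J assume J: "J \<in> positroid_bases n k I"
  have "J \<notin> nonbasic_cints n k I"
  proof
    assume "J \<in> nonbasic_cints n k I"
    then obtain i where i: "i \<in> {1..n}" "I i \<noteq> cint n k (int i)" "J = cint n k (int i)"
      unfolding nonbasic_cints_def by blast
    then have "I i = cint n k (int i)"
      using gale_le_positroid_basis[OF J i(1)] necklace_subset card_necklace
      by (intro eq_cint_of_gale_le) simp_all
    then show False
      using i(2) by simp
  qed
  then show "J \<in> bases_avoiding {1..n} k (nonbasic_cints n k I)"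
    using positroid_basisD[OF J] unfolding bases_avoiding_def by blast
next
  fix J assume "J \<in> bases_avoiding {1..n} k (nonbasic_cints n k I)"
  then have J: "J \<subseteq> {1..n}" "card J = k" "J \<notin> nonbasic_cints n k I"
    unfolding bases_avoiding_def by auto
  have "gale_le n t (I t) J" if t: "t \<in> {1..n}" for t
  proof (cases "I t = cint n k (int t)")
    case True
    then show ?thesis
      using gale_le_cint[OF J(1,2)] by simp
  next
    case False
    then have "I t = cint_shift n k (int t)" "J \<noteq> cint n k (int t)"
      using sparse t J(3) unfolding sparse_necklace_def nonbasic_cints_def by blast+
    then show ?thesis
      using gale_le_cint_shift[OF J(1,2)] by simp
  qed
  then show "J \<in> positroid_bases n k I"
    using J unfolding positroid_bases_def by blast
qed

lemma sparse_paving_iff_sparse_necklace: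
  "sparse_paving {1..n} (positroid_bases n k I) \<longleftrightarrow> sparse_necklace n k I"
proof
  assume "sparse_necklace n k I"
  then show "sparse_paving {1..n} (positroid_bases n k I)"
    using positroid_bases_eq_bases_avoiding
      sparse_family.sparse_paving_bases_avoiding[OF sparse_family_nonbasic_cints] by simp
qed (rule sparse_necklace_of_sparse_paving)

lemma circuit_hyperplanes_positroid:
  assumes "sparse_paving {1..n} (positroid_bases n k I)"
  shows "circuit_hyperplanes {1..n} (positroid_bases n k I) = nonbasic_cints n k I"
proof -
  have "sparse_necklace n k I"
    using assms sparse_paving_iff_sparse_necklace by blast
  then show ?thesis
    using positroid_bases_eq_bases_avoiding
      sparse_family.circuit_hyperplanes_bases_avoiding[OF sparse_family_nonbasic_cints] by simp
qed

end

theorem theorem3p2: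
  fixes n k :: nat and I :: "nat \<Rightarrow> nat set"
  assumes "2 \<le> k" and "k + 2 \<le> n"
    and "grassmann_necklace n k I"
  shows "(sparse_paving {1..n} (positroid_bases n k I) \<longleftrightarrow>
           (\<forall>i\<in>{1..n}. I i \<noteq> cint n k (int i) \<longrightarrow>
              I (cyc n (int i - 1)) = cint n k (int i - 1) \<and>
              I (cyc n (int i + 1)) = cint n k (int i + 1) \<and>
              I i = (cint n k (int i) - {cyc n (int i + int k - 1)}) \<union> {cyc n (int i + int k)}))
       \<and> (sparse_paving {1..n} (positroid_bases n k I) \<longrightarrow>
           circuit_hyperplanes {1..n} (positroid_bases n k I) =
             {cint n k (int i) | i. i \<in> {1..n} \<and> I i \<noteq> cint n k (int i)})"
proof -
  interpret positroid_necklace n k I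
    by unfold_locales (use assms in auto)
  show ?thesis
    using sparse_paving_iff_sparse_necklace circuit_hyperplanes_positroid
    unfolding sparse_necklace_def cint_shift_def nonbasic_cints_def by blast
qed

end
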